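(* Let $k\ge1$, let $A_k$ be the matrix defined below, and let $\mathbf{b}=(\mathbf{w}_1,\mathbf{w}_2,c)^{\mathsf T}\in\mathbb{Z}^{2k+1}$ ($\mathbf{w}_1,\mathbf{w}_2\in\mathbb{Z}^k$, $c\in\mathbb{Z}$) with $\mathcal{F}_{A_k}(\mathbf{b})\ne\emptyset$. For every integer $s\in[l(\mathbf{b}),u(\mathbf{b})]$, the minimal degree and the vertex-connectivity of the induced subgraph of $G_{A_k,\mathbf{b},\mathcal{G}(A_k)}$ on $C_s(\mathbf{b})$ both equal $$|\mathrm{supp}(\mathbf{w}_1+s\mathbf{1}_k)|+|\mathrm{supp}(\mathbf{w}_2+(c-s)\mathbf{1}_k)|.$$
   Context: $I_k$ is the $k\times k$ identity, $\mathbf{1}_k$ the all-ones vector in $\mathbb{Z}^k$. Define $$A_k=\begin{pmatrix} I_k & I_k & 0 & 0 & -\mathbf{1}_k & \mathbf{0}\\ 0&0&I_k&I_k&\mathbf{0}&-\mathbf{1}_k\\ 0&0&0&0&1&1\end{pmatrix}\in\mathbb{Z}^{(2k+1)\times(4k+2)}$$ (zero blocks of appropriate sizes; last two columns are single columns). Fiber: $\mathcal{F}_A(\mathbf{b})=\{\mathbf{u}\in\mathbb{Z}^n_{\ge0}:A\mathbf{u}=\mathbf{b}\}$; for $\mathcal{M}\subset\mathbb{Z}^n$, $G_{A,\mathbf{b},\mathcal{M}}$ is the graph on $\mathcal{F}_A(\mathbf{b})$ with distinct $\mathbf{u},\mathbf{v}$ adjacent iff $\mathbf{u}-\mathbf{v}\in\pm\mathcal{M}$.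 The Graver basis $\mathcal{G}(A)$ is the set of $\sqsubseteq$-minimal elements of $(\ker A\cap\mathbb{Z}^n)\setminus\{\mathbf{0}\}$, where $\mathbf{u}\sqsubseteq\mathbf{v}$ iff $u_iv_i\ge0$ and $|u_i|\le|v_i|$ for all $i$. $\mathrm{supp}(\mathbf{w})$ is the set of indices of nonzero entries. $\mathbf{w}^-$ has entries $\max(-w_i,0)$; $l(\mathbf{b}):=\|\mathbf{w}_1^-\|_\infty$, $u(\mathbf{b}):=c-\|\mathbf{w}_2^-\|_\infty$; $C_s(\mathbf{b}):=\{\mathbf{u}\in\mathcal{F}_{A_k}(\mathbf{b}):u_{4k+1}=s\}$. A graph $G=(V,E)$ is $\ell$-vertex-connected if $|V|>\ell$ and deleting any fewer than $\ell$ vertices leaves it connected; the vertex-connectivity is the largest such $\ell$. *)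

theory Defs
  imports Main
begin

text \<open>Conventions: an integer vector in Z^n is a function nat => int that vanishes
  at indices >= n; coordinates are 0-indexed (paper index i corresponds to i-1).
  A matrix in Z^(m x n) is a function nat => nat => int, only entries i<m, j<n matter.\<close>

definition ZZn :: "nat \<Rightarrow> (nat \<Rightarrow> int) set" where
  "ZZn n = {u. \<forall>i\<ge>n. u i = 0}"

definition matvec :: "(nat \<Rightarrow> nat \<Rightarrow> int) \<Rightarrow> nat \<Rightarrow> (nat \<Rightarrow> int) \<Rightarrow> nat \<Rightarrow> int" where
  "matvec A n u = (\<lambda>i. \<Sum>j<n. A i j * u j)"

definition fiber :: "(nat \<Rightarrow> nat \<Rightarrow> int) \<Rightarrow> nat \<Rightarrow> nat \<Rightarrow> (nat \<Rightarrow> int) \<Rightarrow> (nat \<Rightarrow> int) set" where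
  "fiber A m n b = {u \<in> ZZn n. (\<forall>j<n. 0 \<le> u j) \<and> (\<forall>i<m. matvec A n u i = b i)}"

definition int_kernel :: "(nat \<Rightarrow> nat \<Rightarrow> int) \<Rightarrow> nat \<Rightarrow> nat \<Rightarrow> (nat \<Rightarrow> int) set" where
  "int_kernel A m n = {u \<in> ZZn n. \<forall>i<m. matvec A n u i = 0}"

definition conf_le :: "(nat \<Rightarrow> int) \<Rightarrow> (nat \<Rightarrow> int) \<Rightarrow> bool" where
  "conf_le u v \<longleftrightarrow> (\<forall>i. u i * v i \<ge> 0 \<and> \<bar>u i\<bar> \<le> \<bar>v i\<bar>)"

definition graver :: "(nat \<Rightarrow> nat \<Rightarrow> int) \<Rightarrow> nat \<Rightarrow> nat \<Rightarrow> (nat \<Rightarrow> int) set" where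
  "graver A m n = {v \<in> int_kernel A m n - {\<lambda>_. 0}.
      \<not> (\<exists>u \<in> int_kernel A m n - {\<lambda>_. 0}. conf_le u v \<and> u \<noteq> v)}"

definition fadj :: "(nat \<Rightarrow> int) set \<Rightarrow> (nat \<Rightarrow> int) \<Rightarrow> (nat \<Rightarrow> int) \<Rightarrow> bool" where
  "fadj M u v \<longleftrightarrow> u \<noteq> v \<and> ((\<lambda>i. u i - v i) \<in> M \<or> (\<lambda>i. v i - u i) \<in> M)"

definition min_degree :: "'a set \<Rightarrow> ('a \<Rightarrow> 'a \<Rightarrow> bool) \<Rightarrow> nat" where
  "min_degree V adj = Min ((\<lambda>u. card {v \<in> V. adj u v}) ` V)"

definition connected_on :: "'a set \<Rightarrow> ('a \<Rightarrow> 'a \<Rightarrow> bool) \<Rightarrow> bool" where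
  "connected_on V adj \<longleftrightarrow>
     (\<forall>x\<in>V. \<forall>y\<in>V. (\<lambda>a b. a \<in> V \<and> b \<in> V \<and> adj a b)\<^sup>*\<^sup>* x y)"

definition vertex_connected :: "'a set \<Rightarrow> ('a \<Rightarrow> 'a \<Rightarrow> bool) \<Rightarrow> nat \<Rightarrow> bool" where
  "vertex_connected V adj l \<longleftrightarrow> finite V \<and> card V > l \<and>
     (\<forall>S \<subseteq> V. card S < l \<longrightarrow> connected_on (V - S) adj)"

definition vertex_connectivity :: "'a set \<Rightarrow> ('a \<Rightarrow> 'a \<Rightarrow> bool) \<Rightarrow> nat" where
  "vertex_connectivity V adj = (GREATEST l. vertex_connected V adj l)"

definition Amat :: "nat \<Rightarrow> nat \<Rightarrow> nat \<Rightarrow> int" where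
  "Amat k i j =
     (if i < k then
        (if j = i \<or> j = k + i then 1 else if j = 4*k then -1 else 0)
      else if i < 2*k then
        (if j = 2*k + (i - k) \<or> j = 3*k + (i - k) then 1 else if j = 4*k + 1 then -1 else 0)
      else if i = 2*k then
        (if j = 4*k \<or> j = 4*k + 1 then 1 else 0)
      else 0)"

definition bvec :: "nat \<Rightarrow> (nat \<Rightarrow> int) \<Rightarrow> (nat \<Rightarrow> int) \<Rightarrow> int \<Rightarrow> nat \<Rightarrow> int" where
  "bvec k w1 w2 c = (\<lambda>i. if i < k then w1 i else if i < 2*k then w2 (i - k)
                         else if i = 2*k then c else 0)"

definition negnorm :: "nat \<Rightarrow> (nat \<Rightarrow> int) \<Rightarrow> int" where
  "negnorm k w = Max ((\<lambda>i. max (- w i) 0) ` {..<k})"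

definition lb :: "nat \<Rightarrow> (nat \<Rightarrow> int) \<Rightarrow> int" where
  "lb k w1 = negnorm k w1"

definition ub :: "nat \<Rightarrow> (nat \<Rightarrow> int) \<Rightarrow> int \<Rightarrow> int" where
  "ub k w2 c = c - negnorm k w2"

text \<open>C_s(b): elements of the fiber with coordinate 4k+1 (1-indexed) equal to s.\<close>
definition Cs :: "nat \<Rightarrow> (nat \<Rightarrow> int) \<Rightarrow> (nat \<Rightarrow> int) \<Rightarrow> int \<Rightarrow> int \<Rightarrow> (nat \<Rightarrow> int) set" where
  "Cs k w1 w2 c s = {u \<in> fiber (Amat k) (2*k+1) (4*k+2) (bvec k w1 w2 c). u (4*k) = s}"

end

theory Submission
  imports Defs
begin

text \<open>
  On \<open>C\<^sub>s(b)\<close> the last two coordinates are fixed to \<open>s\<close> and \<open>c - s\<close>, so the rows of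
  \<open>A\<^sub>k\<close> force \<open>u\<^sub>j + u\<^sub>j\<^sub>+\<^sub>k = \<sigma>\<^sub>j\<close> for each pair of coordinates, with \<open>\<sigma>\<^sub>j\<close> an entry of
  \<open>w\<^sub>1 + s\<close> or of \<open>w\<^sub>2 + (c - s)\<close>; the hypothesis \<open>l(b) \<le> s \<le> u(b)\<close> makes \<open>s\<close>,
  \<open>c - s\<close> and all \<open>\<sigma>\<^sub>j\<close> nonnegative. So \<open>u\<close> is determined by its coordinates \<open>u\<^sub>j\<close> with \<open>\<sigma>\<^sub>j > 0\<close>, which range
  over the box \<open>\<Prod> [0, \<sigma>\<^sub>j]\<close>. The Graver elements of \<open>A\<^sub>k\<close> vanishing on the last two
  coordinates are exactly \<open>\<plusminus>(e\<^sub>j - e\<^sub>j\<^sub>+\<^sub>k)\<close>, so the induced graph on \<open>C\<^sub>s(b)\<close> is the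
  grid graph of this box. In the grid graph of a box with \<open>d\<close> nondegenerate sides every
  vertex has degree at least \<open>d\<close>, a corner has degree exactly \<open>d\<close>, and deleting fewer
  than \<open>d\<close> vertices leaves it connected (induction on \<open>d\<close>, cutting the box into layers
  along one side); so both quantities equal the number of nonzero \<open>\<sigma>\<^sub>j\<close>.
\<close>

section \<open>Induced subgraphs and graph isomorphisms\<close>

abbreviation reachable_in :: "'a set \<Rightarrow> ('a \<Rightarrow> 'a \<Rightarrow> bool) \<Rightarrow> 'a \<Rightarrow> 'a \<Rightarrow> bool" where
  "reachable_in V adj \<equiv> (\<lambda>a b. a \<in> V \<and> b \<in> V \<and> adj a b)\<^sup>*\<^sup>*"

lemma connected_onD: "connected_on V adj \<Longrightarrow> x \<in> V \<Longrightarrow> y \<in> V \<Longrightarrow> reachable_in V adj x y"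
  unfolding connected_on_def by blast

lemma reachable_in_sym:
  assumes "reachable_in V adj x y" and "\<And>a b. adj a b \<Longrightarrow> adj b a"
  shows "reachable_in V adj y x"
  using assms(1)
proof (induction rule: rtranclp_induct)
  case (step y z)
  then show ?case
    using assms(2) by (metis (mono_tags, lifting) converse_rtranclp_into_rtranclp)
qed simp

lemma reachable_in_image:
  assumes "reachable_in V adj x y"
    and "\<And>a b. a \<in> V \<Longrightarrow> b \<in> V \<Longrightarrow> adj a b \<Longrightarrow> adj' (h a) (h b)" and "h ` V \<subseteq> V'"
  shows "reachable_in V' adj' (h x) (h y)"
  using assms(1)
proof (induction rule: rtranclp_induct)
  case (step y z)
  then have "h y \<in> V' \<and> h z \<in> V' \<and> adj' (h y) (h z)"
    using assms(2,3) by auto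
  then show ?case
    using step.IH by (simp add: rtranclp.rtrancl_into_rtrancl)
qed simp

lemma connected_on_image:
  assumes "connected_on V adj"
    and "\<And>a b. a \<in> V \<Longrightarrow> b \<in> V \<Longrightarrow> adj a b \<Longrightarrow> adj' (h a) (h b)"
  shows "connected_on (h ` V) adj'"
  using assms reachable_in_image[of V adj _ _ adj' h "h ` V"]
  unfolding connected_on_def by blast

definition graph_iso ::
    "('a \<Rightarrow> 'b) \<Rightarrow> 'a set \<Rightarrow> ('a \<Rightarrow> 'a \<Rightarrow> bool) \<Rightarrow> 'b set \<Rightarrow> ('b \<Rightarrow> 'b \<Rightarrow> bool) \<Rightarrow> bool" where
  "graph_iso \<phi> V adj W adj' \<longleftrightarrow>
     bij_betw \<phi> V W \<and> (\<forall>u\<in>V. \<forall>v\<in>V. adj' (\<phi> u) (\<phi> v) \<longleftrightarrow> adj u v)"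

lemma graph_iso_inv:
  assumes "graph_iso \<phi> V adj W adj'"
  shows "graph_iso (inv_into V \<phi>) W adj' V adj"
proof -
  have bij: "bij_betw \<phi> V W" and adj: "\<forall>u\<in>V. \<forall>v\<in>V. adj' (\<phi> u) (\<phi> v) \<longleftrightarrow> adj u v"
    using assms unfolding graph_iso_def by auto
  have "adj (inv_into V \<phi> g) (inv_into V \<phi> g') \<longleftrightarrow> adj' g g'" if "g \<in> W" "g' \<in> W" for g g'
    using adj bij that bij_betw_inv_into_right[OF bij] bij_betw_apply[OF bij_betw_inv_into[OF bij]]
    by metis
  then show ?thesis
    unfolding graph_iso_def using bij_betw_inv_into[OF bij] by blast
qed

lemma vertex_connected_graph_iso:
  assumes iso: "graph_iso \<phi> V adj W adj'" and vc: "vertex_connected V adj l"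
  shows "vertex_connected W adj' l"
  unfolding vertex_connected_def
proof (intro conjI allI impI)
  have bij: "bij_betw \<phi> V W" and adj: "\<forall>u\<in>V. \<forall>v\<in>V. adj' (\<phi> u) (\<phi> v) \<longleftrightarrow> adj u v"
    using iso unfolding graph_iso_def by auto
  have fin: "finite V" and card: "l < card V"
    and con: "\<And>S. S \<subseteq> V \<Longrightarrow> card S < l \<Longrightarrow> connected_on (V - S) adj"
    using vc unfolding vertex_connected_def by auto
  show "finite W" "l < card W"
    using fin card bij_betw_finite[OF bij] bij_betw_same_card[OF bij] by auto
  fix T assume T: "T \<subseteq> W" "card T < l"
  define S where "S = inv_into V \<phi> ` T"
  have "S \<subseteq> V"
    using T(1) bij_betw_inv_into[OF bij] unfolding S_def bij_betw_def by blast
  moreover have "card S < l"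
    using T(2) card_image_le[of T] \<open>finite W\<close> T(1) finite_subset unfolding S_def
    by (metis le_less_trans)
  ultimately have "connected_on (V - S) adj" by (rule con)
  moreover have "\<phi> ` (V - S) = W - T"
  proof -
    have "\<phi> ` S = T"
      using bij T(1) image_inv_into_cancel[of \<phi> V W T] unfolding S_def bij_betw_def by blast
    then show ?thesis
      using bij \<open>S \<subseteq> V\<close> inj_on_image_set_diff[of \<phi> V V S] unfolding bij_betw_def by auto
  qed
  ultimately show "connected_on (W - T) adj'"
    using connected_on_image[of "V - S" adj adj' \<phi>] adj by auto
qed

lemma vertex_connectivity_graph_iso:
  assumes "graph_iso \<phi> V adj W adj'"
  shows "vertex_connectivity V adj = vertex_connectivity W adj'"
proof -
  have "vertex_connected V adj = vertex_connected W adj'"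
    using vertex_connected_graph_iso[OF assms] vertex_connected_graph_iso[OF graph_iso_inv[OF assms]]
    by blast
  then show ?thesis unfolding vertex_connectivity_def by simp
qed

lemma min_degree_graph_iso:
  assumes "graph_iso \<phi> V adj W adj'"
  shows "min_degree V adj = min_degree W adj'"
proof -
  have bij: "bij_betw \<phi> V W" and adj: "\<forall>u\<in>V. \<forall>v\<in>V. adj' (\<phi> u) (\<phi> v) \<longleftrightarrow> adj u v"
    using assms unfolding graph_iso_def by auto
  have "card {v \<in> V. adj u v} = card {w \<in> W. adj' (\<phi> u) w}" if "u \<in> V" for u
  proof -
    have "\<phi> ` {v \<in> V. adj u v} = {w \<in> W. adj' (\<phi> u) w}"
      using adj that bij unfolding bij_betw_def by auto
    moreover have "inj_on \<phi> {v \<in> V. adj u v}"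
      using bij unfolding bij_betw_def by (auto intro: inj_on_subset)
    ultimately show ?thesis by (metis card_image)
  qed
  then have "(\<lambda>u. card {v \<in> V. adj u v}) ` V = (\<lambda>w. card {v \<in> W. adj' w v}) ` W"
    using bij unfolding bij_betw_def by (auto simp: image_image cong: image_cong)
  then show ?thesis unfolding min_degree_def by simp
qed

lemma vertex_connected_le_degree:
  assumes vc: "vertex_connected V adj l" and v: "v \<in> V" and irrefl: "\<not> adj v v"
  shows "l \<le> card {w \<in> V. adj v w}"
proof (rule ccontr)
  define N where "N = {w \<in> V. adj v w}"
  assume "\<not> l \<le> card {w \<in> V. adj v w}"
  then have small: "card N < l" unfolding N_def by simp
  have fin: "finite V" and big: "l < card V"
    and con: "\<forall>S\<subseteq>V. card S < l \<longrightarrow> connected_on (V - S) adj"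
    using vc unfolding vertex_connected_def by auto
  have NV: "N \<subseteq> V" unfolding N_def by auto
  have "card (insert v N) \<le> card N + 1"
    using finite_subset[OF NV fin] by (simp add: card_insert_if)
  then have "card (insert v N) < card V" using small big by linarith
  moreover have "finite (insert v N)" using finite_subset[OF NV fin] by simp
  ultimately have "\<not> V \<subseteq> insert v N" using card_mono leD by blast
  then obtain w where w: "w \<in> V" "w \<notin> insert v N" by blast
  have "v \<notin> N" using irrefl unfolding N_def by auto
  then have "reachable_in (V - N) adj v w"
    using con NV small v w unfolding connected_on_def by blast
  then show False
  proof (cases rule: converse_rtranclpE)
    case (step b)
    then show False unfolding N_def by auto
  qed (use w in simp)
qed

section \<open>Grid graphs of boxes\<close>

definition box :: "nat set \<Rightarrow> (nat \<Rightarrow> int) \<Rightarrow> (nat \<Rightarrow> int) set" where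
  "box I a = {f. \<forall>j. (j \<in> I \<longrightarrow> 0 \<le> f j \<and> f j \<le> a j) \<and> (j \<notin> I \<longrightarrow> f j = 0)}"

definition unit_step :: "(nat \<Rightarrow> int) \<Rightarrow> (nat \<Rightarrow> int) \<Rightarrow> bool" where
  "unit_step f g \<longleftrightarrow> (\<exists>j. g = f(j := f j + 1) \<or> g = f(j := f j - 1))"

lemma unit_step_sym: "unit_step f g \<Longrightarrow> unit_step g f"
proof -
  assume "unit_step f g"
  then obtain j where "g = f(j := f j + 1) \<or> g = f(j := f j - 1)"
    unfolding unit_step_def by blast
  then have "f = g(j := g j - 1) \<or> f = g(j := g j + 1)" by auto
  then show ?thesis unfolding unit_step_def by blast
qed

lemma unit_step_irrefl: "\<not> unit_step f f"
  unfolding unit_step_def by (metis fun_upd_same add_cancel_left_right diff_0_right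
    diff_left_imp_eq zero_neq_one)

lemma unit_step_fun_upd:
  assumes "unit_step g g'" and "g i = g' i"
  shows "unit_step (g(i := t)) (g'(i := t))"
proof -
  obtain j where j: "g' = g(j := g j + 1) \<or> g' = g(j := g j - 1)"
    using assms(1) unfolding unit_step_def by blast
  then have "j \<noteq> i" using assms(2) by auto
  then have "g'(i := t) = (g(i := t))(j := (g(i := t)) j + 1)
           \<or> g'(i := t) = (g(i := t))(j := (g(i := t)) j - 1)"
    using j by (auto simp: fun_upd_twist)
  then show ?thesis unfolding unit_step_def by blast
qed

lemma finite_box: "finite I \<Longrightarrow> finite (box I a)"
proof -
  assume fin: "finite I"
  define B where "B = (\<Union>j\<in>I. {0..a j})"
  have "finite B" unfolding B_def using fin by blast
  then have "finite {f. \<forall>j. (j \<in> I \<longrightarrow> f j \<in> B) \<and> (j \<notin> I \<longrightarrow> f j = (0::int))}"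
    by (rule finite_set_of_finite_funs[OF fin])
  moreover have "box I a \<subseteq> {f. \<forall>j. (j \<in> I \<longrightarrow> f j \<in> B) \<and> (j \<notin> I \<longrightarrow> f j = 0)}"
    unfolding box_def B_def by auto
  ultimately show ?thesis by (rule finite_subset[rotated])
qed

lemma zero_in_box: "\<forall>j\<in>I. 1 \<le> a j \<Longrightarrow> (\<lambda>_. 0) \<in> box I a"
  unfolding box_def by force

lemma fun_upd_in_box:
  "f \<in> box I a \<Longrightarrow> j \<in> I \<Longrightarrow> 0 \<le> t \<Longrightarrow> t \<le> a j \<Longrightarrow> f(j := t) \<in> box I a"
  unfolding box_def by auto

lemma box_degree_ge:
  assumes fin: "finite I" and a: "\<forall>j\<in>I. 1 \<le> a j" and f: "f \<in> box I a"
  shows "card I \<le> card {g \<in> box I a. unit_step f g}"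
proof -
  define nb where "nb j = (if f j < a j then f(j := f j + 1) else f(j := f j - 1))" for j
  have moved: "nb j j \<noteq> f j" and fixed: "l \<noteq> j \<Longrightarrow> nb j l = f l" for j l
    unfolding nb_def by auto
  have "inj_on nb I"
  proof (rule inj_onI)
    fix j j' assume "nb j = nb j'"
    then show "j = j'" using moved[of j] fixed[where j = j' and l = j] by auto
  qed
  moreover have "nb ` I \<subseteq> {g \<in> box I a. unit_step f g}"
  proof
    fix g assume "g \<in> nb ` I"
    then obtain j where j: "j \<in> I" "g = nb j" by blast
    have "0 \<le> f j" "f j \<le> a j" "1 \<le> a j" using f a j(1) unfolding box_def by auto
    then have "g \<in> box I a"
      using fun_upd_in_box[OF f j(1)] unfolding j(2) nb_def by simp
    moreover have "unit_step f g"
      unfolding unit_step_def j(2) nb_def by (intro exI[of _ j]) simp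
    ultimately show "g \<in> {g \<in> box I a. unit_step f g}" by blast
  qed
  moreover have "finite {g \<in> box I a. unit_step f g}" using finite_box[OF fin] by simp
  ultimately show ?thesis by (rule card_inj_on_le)
qed

lemma box_degree_zero:
  assumes a: "\<forall>j\<in>I. 1 \<le> a j"
  shows "card {g \<in> box I a. unit_step (\<lambda>_. 0) g} = card I"
proof -
  let ?e = "\<lambda>j. (\<lambda>_. 0 :: int)(j := 1)"
  have "{g \<in> box I a. unit_step (\<lambda>_. 0) g} = ?e ` I"
  proof (intro equalityI subsetI)
    fix g assume "g \<in> {g \<in> box I a. unit_step (\<lambda>_. 0) g}"
    then obtain j where g: "g \<in> box I a" "g = ?e j \<or> g = (\<lambda>_. 0)(j := -1)"
      unfolding unit_step_def by auto
    then have "g j \<noteq> 0" by auto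
    then have "j \<in> I" using g(1) unfolding box_def by auto
    then have "0 \<le> g j" using g(1) unfolding box_def by auto
    then have "g = ?e j" using g(2) by auto
    then show "g \<in> ?e ` I" using \<open>j \<in> I\<close> by blast
  next
    fix g assume "g \<in> ?e ` I"
    then obtain j where j: "j \<in> I" "g = ?e j" by blast
    then have "g \<in> box I a"
      using fun_upd_in_box[OF zero_in_box[OF a] j(1), of 1] a j(1) by simp
    moreover have "unit_step (\<lambda>_. 0) g"
      unfolding unit_step_def j(2) by (intro exI[of _ j]) simp
    ultimately show "g \<in> {g \<in> box I a. unit_step (\<lambda>_. 0) g}" by blast
  qed
  moreover have "inj_on ?e I"
    by (rule inj_onI) (metis fun_upd_same fun_upd_other zero_neq_one)
  ultimately show ?thesis by (simp add: card_image)
qed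

lemma card_less_card_box:
  assumes fin: "finite I" and a: "\<forall>j\<in>I. 1 \<le> a j"
  shows "card I < card (box I a)"
proof -
  let ?N = "{g \<in> box I a. unit_step (\<lambda>_. 0) g}"
  have "(\<lambda>_. 0) \<notin> ?N" using unit_step_irrefl by blast
  then have "card (insert (\<lambda>_. 0) ?N) = card I + 1"
    using box_degree_zero[OF a] finite_box[OF fin] by simp
  moreover have "card (insert (\<lambda>_. 0) ?N) \<le> card (box I a)"
    using zero_in_box[OF a] by (intro card_mono[OF finite_box[OF fin]]) blast
  ultimately show ?thesis by linarith
qed

lemma box_min_degree:
  assumes "finite I" and "\<forall>j\<in>I. 1 \<le> a j"
  shows "min_degree (box I a) unit_step = card I"
  unfolding min_degree_def
proof (rule Min_eqI)
  show "finite ((\<lambda>u. card {v \<in> box I a. unit_step u v}) ` box I a)"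
    using finite_box[OF assms(1)] by simp
  have "card {v \<in> box I a. unit_step (\<lambda>_. 0) v} \<in> (\<lambda>u. card {v \<in> box I a. unit_step u v}) ` box I a"
    using zero_in_box[OF assms(2)] by (rule imageI)
  then show "card I \<in> (\<lambda>u. card {v \<in> box I a. unit_step u v}) ` box I a"
    by (simp only: box_degree_zero[OF assms(2)])
qed (use box_degree_ge[OF assms] in blast)

lemma box_insert_D:
  assumes "i \<notin> I" and "f \<in> box (insert i I) a"
  shows "f(i := 0) \<in> box I a" and "0 \<le> f i" and "f i \<le> a i"
  using assms unfolding box_def by auto

lemma box_coord_notin: "i \<notin> I \<Longrightarrow> g \<in> box I a \<Longrightarrow> g i = 0"
  unfolding box_def by auto

lemma box_insert_fun_upd:
  "g \<in> box I a \<Longrightarrow> 0 \<le> t \<Longrightarrow> t \<le> a i \<Longrightarrow> g(i := t) \<in> box (insert i I) a"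
  unfolding box_def by auto

text \<open>
  At most \<open>|I|\<close> vertices \<open>S\<close> are deleted
  from the box over \<open>insert i I\<close>; \<open>slice t\<close> is the part of \<open>S\<close> in the layer \<open>f i = t\<close>,
  projected to the box over \<open>I\<close>. Two slices together have at most \<open>|S| < |box I a|\<close>
  points, so some column meets neither of two given layers in \<open>S\<close>; and if the induction
  hypothesis does not apply to a slice, all of \<open>S\<close> lies in that layer.
\<close>

context
  fixes I :: "nat set" and i :: nat and a :: "nat \<Rightarrow> int" and S :: "(nat \<Rightarrow> int) set"
  assumes finite_I: "finite I" and i_notin_I: "i \<notin> I" and a_pos: "\<forall>j\<in>insert i I. 1 \<le> a j"
    and S_sub: "S \<subseteq> box (insert i I) a" and card_S: "card S \<le> card I"
    and IH: "\<And>T. T \<subseteq> box I a \<Longrightarrow> card T < card I \<or> T = {} \<Longrightarrow> connected_on (box I a - T) unit_step"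
begin

abbreviation rest :: "(nat \<Rightarrow> int) set" where
  "rest \<equiv> box (insert i I) a - S"

abbreviation slice :: "int \<Rightarrow> (nat \<Rightarrow> int) set" where
  "slice t \<equiv> {g \<in> box I a. g(i := t) \<in> S}"

abbreviation thin :: "int \<Rightarrow> bool" where
  "thin t \<equiv> card (slice t) < card I \<or> slice t = {}"

lemma finite_S: "finite S"
  using S_sub finite_box[of "insert i I" a] finite_I finite_subset by blast

lemma slice_lift: "g \<in> box I a \<Longrightarrow> (g(i := t))(i := 0) = g"
  using box_coord_notin[OF i_notin_I] by (auto simp: fun_eq_iff)

lemma card_slice_le: "card (slice t) \<le> card (S \<inter> {f. f i = t})"
proof -
  have "slice t \<subseteq> (\<lambda>f. f(i := 0)) ` (S \<inter> {f. f i = t})"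
  proof
    fix g assume "g \<in> slice t"
    then show "g \<in> (\<lambda>f. f(i := 0)) ` (S \<inter> {f. f i = t})"
      using slice_lift[of g t] by (intro image_eqI[of _ _ "g(i := t)"]) auto
  qed
  then have "card (slice t) \<le> card ((\<lambda>f. f(i := 0)) ` (S \<inter> {f. f i = t}))"
    using finite_S by (intro card_mono) auto
  also have "\<dots> \<le> card (S \<inter> {f. f i = t})"
    by (rule card_image_le) (use finite_S in auto)
  finally show ?thesis .
qed

lemma exists_outside_slices: "\<exists>h\<in>box I a. h \<notin> slice t \<and> h \<notin> slice t'"
proof (rule ccontr)
  assume "\<not> ?thesis"
  then have cover: "box I a \<subseteq> slice t \<union> slice t'" by blast
  have "slice t \<union> slice t' \<subseteq> (\<lambda>f. f(i := 0)) ` S"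
  proof
    fix g assume "g \<in> slice t \<union> slice t'"
    then obtain u where "g \<in> box I a" "g(i := u) \<in> S" by blast
    then show "g \<in> (\<lambda>f. f(i := 0)) ` S"
      using slice_lift[of g u] by (intro image_eqI[of _ _ "g(i := u)"]) simp_all
  qed
  then have "card (box I a) \<le> card ((\<lambda>f. f(i := 0)) ` S)"
    using cover finite_S by (intro card_mono) auto
  also have "\<dots> \<le> card S" by (rule card_image_le[OF finite_S])
  also have "\<dots> < card (box I a)"
  proof -
    have "\<forall>j\<in>I. 1 \<le> a j" using a_pos by simp
    then show ?thesis using card_S card_less_card_box[OF finite_I] by (meson le_less_trans)
  qed
  finally show False by simp
qed

lemma S_in_layer_if_not_thin:
  assumes "\<not> thin t"
  shows "S \<subseteq> {f. f i = t}"
proof -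
  have "card S \<le> card (S \<inter> {f. f i = t})"
    using assms card_slice_le[of t] card_S by linarith
  then have "S \<inter> {f. f i = t} = S" using finite_S by (intro card_seteq) auto
  then show ?thesis by blast
qed

lemma layer_reachable:
  assumes "thin t" and x: "x \<in> rest" "x i = t" and y: "y \<in> rest" "y i = t"
  shows "reachable_in rest unit_step x y"
proof -
  let ?lift = "\<lambda>g. g(i := t)"
  have x_lift: "?lift (x(i := 0)) = x" and y_lift: "?lift (y(i := 0)) = y"
    using x(2) y(2) by auto
  have x0: "x(i := 0) \<in> box I a - slice t" and y0: "y(i := 0) \<in> box I a - slice t"
    using x y box_insert_D(1)[OF i_notin_I] x_lift y_lift by auto
  have "connected_on (box I a - slice t) unit_step"
    by (rule IH) (use assms(1) in auto)
  then have reach: "reachable_in (box I a - slice t) unit_step (x(i := 0)) (y(i := 0))"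
    using x0 y0 by (rule connected_onD)
  have step: "unit_step (?lift g) (?lift g')"
    if "g \<in> box I a - slice t" "g' \<in> box I a - slice t" "unit_step g g'" for g g'
  proof -
    have "g \<in> box I a" "g' \<in> box I a" using that(1,2) by auto
    then have "g i = g' i" using box_coord_notin[OF i_notin_I] by metis
    then show ?thesis using that(3) unit_step_fun_upd by blast
  qed
  have "0 \<le> t" "t \<le> a i" using x box_insert_D(2,3)[OF i_notin_I] by auto
  then have into: "?lift ` (box I a - slice t) \<subseteq> rest"
    using box_insert_fun_upd[of _ I a t i] by blast
  show ?thesis
    using reachable_in_image[of "box I a - slice t" unit_step "x(i := 0)" "y(i := 0)" unit_step
        ?lift rest, OF reach step into]
    unfolding x_lift y_lift .
qed

lemma edge_reachable:
  "f \<in> rest \<Longrightarrow> f(i := f i + 1) \<in> rest \<Longrightarrow> reachable_in rest unit_step f (f(i := f i + 1))"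
  unfolding unit_step_def by (auto intro: r_into_rtranclp)

lemma adjacent_layers_reachable:
  assumes t: "0 \<le> t" "t < a i" and xy: "x \<in> rest" "y \<in> rest" "x i = t" "y i = t + 1"
  shows "reachable_in rest unit_step x y"
proof (cases "thin t")
  case thin_t: True
  show ?thesis
  proof (cases "thin (t + 1)")
    case True
    obtain h where h: "h \<in> box I a" "h \<notin> slice t" "h \<notin> slice (t + 1)"
      using exists_outside_slices by blast
    have h_t: "h(i := t) \<in> rest" and h_t1: "h(i := t + 1) \<in> rest"
      using h t box_insert_fun_upd[of h I a] by auto
    have "reachable_in rest unit_step x (h(i := t))"
      using layer_reachable[OF thin_t xy(1) xy(3) h_t] by simp
    moreover have "reachable_in rest unit_step (h(i := t)) (h(i := t + 1))"
      using edge_reachable[OF h_t] h_t1 by simp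
    moreover have "reachable_in rest unit_step (h(i := t + 1)) y"
      using layer_reachable[OF True h_t1 _ xy(2) xy(4)] by simp
    ultimately show ?thesis by (meson rtranclp_trans)
  next
    case False
    have y_t: "y(i := t) \<in> rest"
      using S_in_layer_if_not_thin[OF False] xy(2) t fun_upd_in_box[OF _ insertI1, of y i I a t]
      by auto
    have "reachable_in rest unit_step x (y(i := t))"
      using layer_reachable[OF thin_t xy(1) xy(3) y_t] by simp
    moreover have "reachable_in rest unit_step (y(i := t)) y"
      using edge_reachable[OF y_t] xy(2,4) by (simp add: fun_upd_idem)
    ultimately show ?thesis by (rule rtranclp_trans)
  qed
next
  case False
  then have S_t: "S \<subseteq> {f. f i = t}" by (rule S_in_layer_if_not_thin)
  then have thin_t1: "thin (t + 1)" by auto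
  have x_t1: "x(i := t + 1) \<in> rest"
    using S_t xy(1) t fun_upd_in_box[OF _ insertI1, of x i I a "t + 1"] by auto
  have "reachable_in rest unit_step x (x(i := t + 1))"
    using edge_reachable[OF xy(1)] x_t1 xy(3) by simp
  moreover have "reachable_in rest unit_step (x(i := t + 1)) y"
    using layer_reachable[OF thin_t1 x_t1 _ xy(2) xy(4)] by simp
  ultimately show ?thesis by (rule rtranclp_trans)
qed

lemma layer_nonempty:
  assumes "0 \<le> t" "t \<le> a i"
  shows "\<exists>z\<in>rest. z i = t"
proof -
  obtain h where "h \<in> box I a" "h \<notin> slice t" using exists_outside_slices by blast
  then have "h(i := t) \<in> rest" using box_insert_fun_upd[of h I a t i] assms by auto
  then show ?thesis by (intro bexI[of _ "h(i := t)"]) simp_all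
qed

lemma rest_coord_bounds: "f \<in> rest \<Longrightarrow> 0 \<le> f i \<and> f i \<le> a i"
  using box_insert_D(2,3)[OF i_notin_I] by auto

lemma rest_reachable_sym: "reachable_in rest unit_step x y \<Longrightarrow> reachable_in rest unit_step y x"
  by (erule reachable_in_sym) (rule unit_step_sym)

lemma same_layer_reachable:
  assumes x: "x \<in> rest" and y: "y \<in> rest" and xy: "x i = y i"
  shows "reachable_in rest unit_step x y"
proof (cases "x i < a i")
  case True
  obtain z where z: "z \<in> rest" "z i = x i + 1"
    using layer_nonempty[of "x i + 1"] rest_coord_bounds[OF x] True by auto
  have "reachable_in rest unit_step x z" "reachable_in rest unit_step y z"
    using adjacent_layers_reachable[of "x i"] rest_coord_bounds[OF x] True x y z xy by auto
  then show ?thesis using rest_reachable_sym by (meson rtranclp_trans)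
next
  case False
  have "1 \<le> a i" using a_pos by simp
  then obtain z where z: "z \<in> rest" "z i = x i - 1"
    using layer_nonempty[of "x i - 1"] rest_coord_bounds[OF x] False by auto
  have "0 \<le> z i" "z i < a i" using rest_coord_bounds[OF z(1)] rest_coord_bounds[OF x] z(2) by auto
  then have "reachable_in rest unit_step z x" "reachable_in rest unit_step z y"
    using adjacent_layers_reachable[of "z i"] z x y xy by auto
  then show ?thesis using rest_reachable_sym by (meson rtranclp_trans)
qed

lemma nearby_reachable:
  assumes x: "x \<in> rest" and y: "y \<in> rest" and d: "\<bar>x i - y i\<bar> \<le> 1"
  shows "reachable_in rest unit_step x y"
proof -
  have "y i = x i + 1 \<or> x i = y i + 1 \<or> x i = y i" using d by (auto simp: abs_le_iff)
  then consider "y i = x i + 1" | "x i = y i + 1" | "x i = y i" by blast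
  then show ?thesis
  proof cases
    case 1
    then show ?thesis
      using adjacent_layers_reachable[of "x i" x y] rest_coord_bounds[OF x] rest_coord_bounds[OF y]
        x y by simp
  next
    case 2
    then show ?thesis
      using adjacent_layers_reachable[of "y i" y x] rest_coord_bounds[OF x] rest_coord_bounds[OF y]
        x y rest_reachable_sym by simp
  next
    case 3
    then show ?thesis using same_layer_reachable[OF x y] by simp
  qed
qed

lemma rest_connected: "connected_on rest unit_step"
proof -
  have reach: "reachable_in rest unit_step x y"
    if "x \<in> rest" "y \<in> rest" "\<bar>y i - x i\<bar> = int d" for d x y
    using that
  proof (induction d arbitrary: y)
    case 0 then show ?case using nearby_reachable by simp
  next
    case (Suc d)
    define t where "t = (if x i \<le> y i then y i - 1 else y i + 1)"
    have "0 \<le> t" "t \<le> a i"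
      using Suc.prems rest_coord_bounds[OF Suc.prems(1)] rest_coord_bounds[OF Suc.prems(2)]
      unfolding t_def by auto
    then obtain z where z: "z \<in> rest" "z i = t" using layer_nonempty by blast
    have "\<bar>z i - x i\<bar> = int d" "\<bar>z i - y i\<bar> \<le> 1"
      using Suc.prems(3) z(2) unfolding t_def by auto
    then have "reachable_in rest unit_step x z" "reachable_in rest unit_step z y"
      using Suc.IH[OF Suc.prems(1) z(1)] nearby_reachable[OF z(1) Suc.prems(2)] by auto
    then show ?case by (rule rtranclp_trans)
  qed
  show ?thesis
    unfolding connected_on_def
  proof (intro ballI)
    fix x y assume "x \<in> rest" "y \<in> rest"
    then show "reachable_in rest unit_step x y"
      using reach[of x y "nat \<bar>y i - x i\<bar>"] by simp
  qed
qed

end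

text \<open>The disjunct \<open>T = {}\<close> is what the induction needs when \<open>I = {}\<close>.\<close>

lemma box_connected_minus:
  assumes "finite I" and "\<forall>j\<in>I. 1 \<le> a j" and "T \<subseteq> box I a" and "card T < card I \<or> T = {}"
  shows "connected_on (box I a - T) unit_step"
  using assms
proof (induction I arbitrary: T rule: finite_induct)
  case empty
  have "box {} a = {\<lambda>_. 0}" unfolding box_def by auto
  then show ?case unfolding connected_on_def by auto
next
  case (insert i I)
  have "card T \<le> card I" using insert.prems(3) insert.hyps by auto
  moreover have "\<forall>j\<in>I. 1 \<le> a j" using insert.prems(1) by simp
  ultimately show ?case
    using rest_connected[OF insert.hyps(1,2) insert.prems(1,2)] insert.IH by blast
qed

lemma box_vertex_connectivity:
  assumes fin: "finite I" and a: "\<forall>j\<in>I. 1 \<le> a j"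
  shows "vertex_connectivity (box I a) unit_step = card I"
  unfolding vertex_connectivity_def
proof (rule Greatest_equality)
  show "vertex_connected (box I a) unit_step (card I)"
    unfolding vertex_connected_def
    using finite_box[OF fin] card_less_card_box[OF fin a] box_connected_minus[OF fin a] by blast
next
  fix l assume "vertex_connected (box I a) unit_step l"
  then have "l \<le> card {g \<in> box I a. unit_step (\<lambda>_. 0) g}"
    using zero_in_box[OF a] unit_step_irrefl by (rule vertex_connected_le_degree)
  then show "l \<le> card I" using box_degree_zero[OF a] by simp
qed

section \<open>The fibres of \<open>A\<^sub>k\<close>\<close>

text \<open>
  The first \<open>4k\<close> coordinates form the pairs \<open>(j, j + k)\<close>, \<open>j \<in> pair_index k\<close>: the pair
  \<open>(i, k + i)\<close> occurs in row \<open>i\<close> of \<open>A\<^sub>k\<close> and \<open>(2k + i, 3k + i)\<close> in row \<open>k + i\<close>.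
  On \<open>C\<^sub>s(b)\<close> the sum over the pair starting at \<open>j\<close> is \<open>pair_sum k w1 w2 c s j\<close>.
\<close>

definition pair_index :: "nat \<Rightarrow> nat set" where
  "pair_index k = {j. j < k \<or> (2*k \<le> j \<and> j < 3*k)}"

definition pair_sum :: "nat \<Rightarrow> (nat \<Rightarrow> int) \<Rightarrow> (nat \<Rightarrow> int) \<Rightarrow> int \<Rightarrow> int \<Rightarrow> nat \<Rightarrow> int" where
  "pair_sum k w1 w2 c s j = (if j < k then w1 j + s else w2 (j - 2*k) + (c - s))"

definition pair_move :: "nat \<Rightarrow> nat \<Rightarrow> nat \<Rightarrow> int" where
  "pair_move k j = (\<lambda>l. if l = j then 1 else if l = j + k then -1 else 0)"

lemma pair_index_D: "j \<in> pair_index k \<Longrightarrow> j + k \<notin> pair_index k \<and> j < 3*k \<and> j + k < 4*k"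
  unfolding pair_index_def by auto

lemma pair_partner_index:
  "l \<notin> pair_index k \<Longrightarrow> l < 4*k \<Longrightarrow> l - k \<in> pair_index k \<and> l - k + k = l"
  unfolding pair_index_def by auto

lemma matvec_Amat_upper:
  assumes "i < k"
  shows "matvec (Amat k) (4*k+2) u i = u i + u (k+i) - u (4*k)"
proof -
  have "Amat k i j * u j = (if j = i then u i else 0) + (if j = k+i then u (k+i) else 0)
                           - (if j = 4*k then u (4*k) else 0)" for j
    using assms by (auto simp: Amat_def)
  then show ?thesis
    unfolding matvec_def using assms by (simp add: sum.distrib sum_subtractf)
qed

lemma matvec_Amat_lower:
  assumes "i < k"
  shows "matvec (Amat k) (4*k+2) u (k+i) = u (2*k+i) + u (3*k+i) - u (4*k+1)"
proof -
  have "Amat k (k+i) j * u j = (if j = 2*k+i then u (2*k+i) else 0)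
      + (if j = 3*k+i then u (3*k+i) else 0) - (if j = 4*k+1 then u (4*k+1) else 0)" for j
    using assms by (auto simp: Amat_def)
  then show ?thesis
    unfolding matvec_def using assms by (simp add: sum.distrib sum_subtractf)
qed

lemma matvec_Amat_last: "matvec (Amat k) (4*k+2) u (2*k) = u (4*k) + u (4*k+1)"
proof -
  have "Amat k (2*k) j * u j
      = (if j = 4*k then u (4*k) else 0) + (if j = 4*k+1 then u (4*k+1) else 0)" for j
    by (auto simp: Amat_def)
  then show ?thesis unfolding matvec_def by (simp add: sum.distrib)
qed

lemma rows_Amat_cases:
  fixes r k :: nat
  assumes "r < 2*k+1"
  obtains "r < k" | i where "i < k" "r = k + i" | "r = 2*k"
proof -
  consider "r < k" | "k \<le> r" "r < 2*k" | "r = 2*k" using assms by linarith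
  then show ?thesis
  proof cases
    case 2
    then have "r - k < k" "r = k + (r - k)" by auto
    then show ?thesis using that(2) by blast
  qed (use that in auto)
qed

lemma Cs_D:
  assumes "u \<in> Cs k w1 w2 c s"
  shows "\<forall>j\<ge>4*k+2. u j = 0" and "u (4*k) = s" and "u (4*k+1) = c - s"
    and "\<And>j. j \<in> pair_index k \<Longrightarrow>
           0 \<le> u j \<and> 0 \<le> u (j+k) \<and> u j + u (j+k) = pair_sum k w1 w2 c s j"
proof -
  have N: "\<forall>j<4*k+2. 0 \<le> u j" and S: "u (4*k) = s"
    and M: "\<forall>r<2*k+1. matvec (Amat k) (4*k+2) u r = bvec k w1 w2 c r"
    using assms unfolding Cs_def fiber_def by auto
  show "\<forall>j\<ge>4*k+2. u j = 0" "u (4*k) = s"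
    using assms unfolding Cs_def fiber_def ZZn_def by auto
  show S1: "u (4*k+1) = c - s"
    using M[rule_format, of "2*k"] matvec_Amat_last[of k u] S by (simp add: bvec_def)
  fix j assume j: "j \<in> pair_index k"
  show "0 \<le> u j \<and> 0 \<le> u (j+k) \<and> u j + u (j+k) = pair_sum k w1 w2 c s j"
  proof (cases "j < k")
    case True
    then show ?thesis
      using M[rule_format, of j] matvec_Amat_upper[OF True, of u] N pair_index_D[OF j] S
      by (simp add: bvec_def pair_sum_def add.commute)
  next
    case False
    define i where "i = j - 2*k"
    have i: "i < k" "j = 2*k + i" using j False unfolding pair_index_def i_def by auto
    then show ?thesis
      using M[rule_format, of "k+i"] matvec_Amat_lower[OF i(1), of u] N pair_index_D[OF j] S1
      by (simp add: bvec_def pair_sum_def add.commute)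
  qed
qed

lemma Cs_I:
  assumes "0 \<le> s" and "0 \<le> c - s"
    and Z: "\<forall>j\<ge>4*k+2. u j = 0" and S: "u (4*k) = s" and S1: "u (4*k+1) = c - s"
    and P: "\<And>j. j \<in> pair_index k \<Longrightarrow>
              0 \<le> u j \<and> 0 \<le> u (j+k) \<and> u j + u (j+k) = pair_sum k w1 w2 c s j"
  shows "u \<in> Cs k w1 w2 c s"
proof -
  have "0 \<le> u j" if "j < 4*k+2" for j
  proof -
    have "j \<in> pair_index k \<or> (j \<notin> pair_index k \<and> j < 4*k) \<or> j = 4*k \<or> j = 4*k+1"
      using that by auto
    then consider "j \<in> pair_index k" | "j \<notin> pair_index k" "j < 4*k" | "j = 4*k" | "j = 4*k+1"
      by blast
    then show ?thesis
    proof cases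
      case 2
      then show ?thesis using P pair_partner_index[of j k] by metis
    qed (use P S S1 assms(1,2) in simp_all)
  qed
  moreover have "matvec (Amat k) (4*k+2) u r = bvec k w1 w2 c r" if "r < 2*k+1" for r
    using that
  proof (cases rule: rows_Amat_cases)
    case 1
    then have "r \<in> pair_index k" unfolding pair_index_def by simp
    then show ?thesis
      using P[of r] matvec_Amat_upper[OF 1, of u] S 1 by (simp add: bvec_def pair_sum_def add.commute)
  next
    case (2 i)
    then have "2*k + i \<in> pair_index k" unfolding pair_index_def by simp
    then show ?thesis
      using P[of "2*k+i"] matvec_Amat_lower[OF 2(1), of u] S1 2
      by (simp add: bvec_def pair_sum_def add.commute add.left_commute)
  next
    case 3
    then show ?thesis using matvec_Amat_last[of k u] S S1 by (simp add: bvec_def)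
  qed
  ultimately show ?thesis unfolding Cs_def fiber_def ZZn_def using Z S by auto
qed

lemma int_kernel_Amat_pair:
  assumes d: "d \<in> int_kernel (Amat k) (2*k+1) (4*k+2)" and j: "j \<in> pair_index k"
  shows "d j + d (j+k) = (if j < k then d (4*k) else d (4*k+1))"
proof -
  have M: "matvec (Amat k) (4*k+2) d r = 0" if "r < 2*k+1" for r
    using d that unfolding int_kernel_def by auto
  show ?thesis
  proof (cases "j < k")
    case True
    then show ?thesis using M[of j] matvec_Amat_upper[OF True, of d] by (simp add: add.commute)
  next
    case False
    define i where "i = j - 2*k"
    have i: "i < k" "j = 2*k + i" using j False unfolding pair_index_def i_def by auto
    then show ?thesis using M[of "k+i"] matvec_Amat_lower[OF i(1), of d] False
      by (simp add: add.commute add.left_commute)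
  qed
qed

lemma int_kernel_AmatI:
  assumes "\<And>l. 4*k+2 \<le> l \<Longrightarrow> d l = 0"
    and "\<And>i. i < k \<Longrightarrow> d i + d (k+i) = d (4*k)"
    and "\<And>i. i < k \<Longrightarrow> d (2*k+i) + d (3*k+i) = d (4*k+1)"
    and "d (4*k) + d (4*k+1) = 0"
  shows "d \<in> int_kernel (Amat k) (2*k+1) (4*k+2)"
  unfolding int_kernel_def ZZn_def
proof (intro CollectI conjI allI impI)
  fix r assume "r < 2*k+1"
  then show "matvec (Amat k) (4*k+2) d r = 0"
  proof (cases rule: rows_Amat_cases)
    case 1 then show ?thesis using matvec_Amat_upper[OF 1, of d] assms(2)[OF 1] by simp
  next
    case (2 i) then show ?thesis using matvec_Amat_lower[OF 2(1), of d] assms(3)[OF 2(1)] by simp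
  next
    case 3 then show ?thesis using matvec_Amat_last[of k d] assms(4) by simp
  qed
qed (use assms(1) in simp)

lemma uminus_in_int_kernel:
  "d \<in> int_kernel A m n \<Longrightarrow> (\<lambda>l. - d l) \<in> int_kernel A m n"
  unfolding int_kernel_def ZZn_def matvec_def by (simp add: sum_negf)

lemma pair_move_in_int_kernel:
  assumes "j \<in> pair_index k"
  shows "pair_move k j \<in> int_kernel (Amat k) (2*k+1) (4*k+2)"
  by (rule int_kernel_AmatI) (use assms in \<open>auto simp: pair_move_def pair_index_def\<close>)

lemma pair_move_in_graver:
  assumes j: "j \<in> pair_index k"
  shows "pair_move k j \<in> graver (Amat k) (2*k+1) (4*k+2)"
proof -
  let ?K = "int_kernel (Amat k) (2*k+1) (4*k+2)"
  have j_bounds: "j + k \<noteq> j" "j < 4*k" "j + k < 4*k" using pair_index_D[OF j] by auto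
  have "e = pair_move k j" if e: "e \<in> ?K - {\<lambda>_. 0}" "conf_le e (pair_move k j)" for e
  proof -
    have conf: "e l * pair_move k j l \<ge> 0 \<and> \<bar>e l\<bar> \<le> \<bar>pair_move k j l\<bar>" for l
      using e(2) unfolding conf_le_def by blast
    have off: "e l = 0" if "l \<noteq> j" "l \<noteq> j + k" for l
      using conf[of l] that unfolding pair_move_def by auto
    have "e j + e (j+k) = 0"
      using int_kernel_Amat_pair[OF _ j, of e] e(1) off j_bounds by (auto split: if_splits)
    moreover have "e j = 0 \<or> e j = 1" using conf[of j] unfolding pair_move_def by auto
    moreover have "e j \<noteq> 0"
    proof
      assume "e j = 0"
      with \<open>e j + e (j+k) = 0\<close> have "e = (\<lambda>_. 0)" using off by (metis add_0)
      then show False using e(1) by simp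
    qed
    ultimately show "e = pair_move k j"
      unfolding pair_move_def using off j_bounds by (auto simp: fun_eq_iff)
  qed
  moreover have "pair_move k j \<noteq> (\<lambda>_. 0)" by (metis pair_move_def zero_neq_one)
  ultimately show ?thesis
    unfolding graver_def using pair_move_in_int_kernel[OF j] by blast
qed

lemma graver_Amat_zero_tail:
  assumes dG: "d \<in> graver (Amat k) (2*k+1) (4*k+2)" and tail: "d (4*k) = 0" "d (4*k+1) = 0"
  shows "\<exists>j\<in>pair_index k. d = pair_move k j \<or> d = (\<lambda>l. - pair_move k j l)"
proof -
  let ?K = "int_kernel (Amat k) (2*k+1) (4*k+2)"
  have dK: "d \<in> ?K" and "d \<noteq> (\<lambda>_. 0)"
    and dmin: "\<And>e. e \<in> ?K - {\<lambda>_. 0} \<Longrightarrow> conf_le e d \<Longrightarrow> e = d"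
    using dG unfolding graver_def by auto
  have partner: "d (p+k) = - d p" if "p \<in> pair_index k" for p
    using int_kernel_Amat_pair[OF dK that] tail by (auto split: if_splits)
  have "\<exists>j\<in>pair_index k. d j \<noteq> 0"
  proof (rule ccontr)
    assume "\<not> ?thesis"
    then have zero: "d p = 0" if "p \<in> pair_index k" for p using that by blast
    have "d l = 0" for l
    proof (cases "l < 4*k")
      case True
      then show ?thesis
        using zero partner pair_partner_index[of l k] by (cases "l \<in> pair_index k") (auto, metis minus_zero)
    next
      case False
      then consider "l = 4*k" | "l = 4*k+1" | "4*k+2 \<le> l" by linarith
      then show ?thesis using tail dK unfolding int_kernel_def ZZn_def by cases auto
    qed
    then show False using \<open>d \<noteq> (\<lambda>_. 0)\<close> by auto
  qed
  then obtain j where j: "j \<in> pair_index k" "d j \<noteq> 0" by blast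
  define e where "e = (if 0 < d j then pair_move k j else (\<lambda>l. - pair_move k j l))"
  have "e \<in> ?K"
    unfolding e_def using pair_move_in_int_kernel[OF j(1)] uminus_in_int_kernel by auto
  moreover have "e \<noteq> (\<lambda>_. 0)"
    unfolding e_def pair_move_def by (auto simp: fun_eq_iff split: if_splits)
  moreover have "conf_le e d"
    unfolding conf_le_def
  proof
    fix l
    show "e l * d l \<ge> 0 \<and> \<bar>e l\<bar> \<le> \<bar>d l\<bar>"
      using j partner[OF j(1)] pair_index_D[OF j(1)] unfolding e_def pair_move_def by auto
  qed
  ultimately have "e = d" using dmin by blast
  then show ?thesis using j(1) unfolding e_def by (auto split: if_splits)
qed

definition active_pairs :: "nat \<Rightarrow> (nat \<Rightarrow> int) \<Rightarrow> (nat \<Rightarrow> int) \<Rightarrow> int \<Rightarrow> int \<Rightarrow> nat set" where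
  "active_pairs k w1 w2 c s = {j \<in> pair_index k. pair_sum k w1 w2 c s j \<noteq> 0}"

definition zero_outside :: "nat set \<Rightarrow> (nat \<Rightarrow> int) \<Rightarrow> nat \<Rightarrow> int" where
  "zero_outside J u = (\<lambda>j. if j \<in> J then u j else 0)"

lemma negnorm_ge: "i < k \<Longrightarrow> max (- w i) 0 \<le> negnorm k w"
  unfolding negnorm_def by (intro Max_ge) auto

lemma card_active_pairs:
  "card (active_pairs k w1 w2 c s)
     = card {i. i < k \<and> w1 i + s \<noteq> 0} + card {i. i < k \<and> w2 i + (c - s) \<noteq> 0}"
proof -
  let ?A = "{i. i < k \<and> w1 i + s \<noteq> 0}" and ?B = "{i. i < k \<and> w2 i + (c - s) \<noteq> 0}"
  have "active_pairs k w1 w2 c s = ?A \<union> (\<lambda>i. 2*k + i) ` ?B"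
  proof (intro equalityI subsetI)
    fix j assume "j \<in> active_pairs k w1 w2 c s"
    then show "j \<in> ?A \<union> (\<lambda>i. 2*k + i) ` ?B"
      unfolding active_pairs_def pair_index_def pair_sum_def
      by (cases "j < k") (auto intro!: image_eqI[of _ _ "j - 2*k"])
  qed (auto simp: active_pairs_def pair_index_def pair_sum_def)
  moreover have "?A \<inter> (\<lambda>i. 2*k + i) ` ?B = {}" by auto
  moreover have "card ((\<lambda>i. 2*k + i) ` ?B) = card ?B" by (simp add: card_image)
  ultimately show ?thesis by (simp add: card_Un_disjoint)
qed

context
  fixes k :: nat and w1 w2 :: "nat \<Rightarrow> int" and c s :: int
  assumes k_pos: "1 \<le> k" and lb: "lb k w1 \<le> s" and ub: "s \<le> ub k w2 c"
begin

abbreviation C :: "(nat \<Rightarrow> int) set" where "C \<equiv> Cs k w1 w2 c s"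
abbreviation J :: "nat set" where "J \<equiv> active_pairs k w1 w2 c s"
abbreviation \<sigma> :: "nat \<Rightarrow> int" where "\<sigma> \<equiv> pair_sum k w1 w2 c s"

lemma pair_sum_nonneg:
  assumes "j \<in> pair_index k"
  shows "0 \<le> \<sigma> j"
proof (cases "j < k")
  case True
  then show ?thesis using negnorm_ge[of j k w1] lb unfolding pair_sum_def lb_def by simp
next
  case False
  then have "j - 2*k < k" using assms unfolding pair_index_def by auto
  then show ?thesis
    using negnorm_ge[of "j - 2*k" k w2] ub False unfolding pair_sum_def ub_def by simp
qed

lemma mem_C_iff:
  "u \<in> C \<longleftrightarrow> (\<forall>j\<ge>4*k+2. u j = 0) \<and> u (4*k) = s \<and> u (4*k+1) = c - s \<and>
     (\<forall>j\<in>pair_index k. 0 \<le> u j \<and> 0 \<le> u (j+k) \<and> u j + u (j+k) = \<sigma> j)"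
proof -
  have "0 \<le> s" using negnorm_ge[of 0 k w1] k_pos lb unfolding lb_def by simp
  moreover have "0 \<le> c - s" using negnorm_ge[of 0 k w2] k_pos ub unfolding ub_def by simp
  ultimately show ?thesis
    using Cs_D[of u k w1 w2 c s] Cs_I[of s c k u w1 w2] by blast
qed

lemma active_pairs_pos: "\<forall>j\<in>J. 1 \<le> \<sigma> j"
  using pair_sum_nonneg unfolding active_pairs_def by force

lemma finite_active_pairs: "finite J"
  by (rule finite_subset[of _ "{..<3*k}"]) (auto simp: active_pairs_def pair_index_def)

lemma C_tail_eq:
  assumes "u \<in> C" "v \<in> C" "4*k \<le> l"
  shows "u l = v l"
proof -
  consider "l = 4*k" | "l = 4*k+1" | "4*k+2 \<le> l" using assms(3) by linarith
  then show ?thesis using assms(1,2) unfolding mem_C_iff by cases auto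
qed

lemma C_partner: "u \<in> C \<Longrightarrow> p \<in> pair_index k \<Longrightarrow> u (p+k) = \<sigma> p - u p"
  using mem_C_iff by fastforce

lemma zero_outside_C: "u \<in> C \<Longrightarrow> l \<in> pair_index k \<Longrightarrow> zero_outside J u l = u l"
  using mem_C_iff[of u] unfolding zero_outside_def active_pairs_def by force

lemma C_eqI:
  assumes u: "u \<in> C" and v: "v \<in> C" and eq: "\<And>p. p \<in> pair_index k \<Longrightarrow> u p = v p"
  shows "u = v"
proof
  fix l
  have "l \<in> pair_index k \<or> (l \<notin> pair_index k \<and> l < 4*k) \<or> 4*k \<le> l" by auto
  then consider "l \<in> pair_index k" | "l \<notin> pair_index k" "l < 4*k" | "4*k \<le> l" by blast
  then show "u l = v l"
  proof cases
    case 2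
    then show ?thesis using C_partner[OF u] C_partner[OF v] eq pair_partner_index by metis
  qed (use eq C_tail_eq[OF u v] in auto)
qed

lemma bij_zero_outside: "bij_betw (zero_outside J) C (box J \<sigma>)"
proof (rule bij_betw_imageI)
  show "inj_on (zero_outside J) C"
    by (rule inj_onI, rule C_eqI) (auto simp: zero_outside_C[symmetric])
  show "zero_outside J ` C = box J \<sigma>"
  proof (intro equalityI subsetI)
    fix g assume "g \<in> zero_outside J ` C"
    then obtain u where "u \<in> C" "g = zero_outside J u" by blast
    then show "g \<in> box J \<sigma>"
      using mem_C_iff[of u] unfolding box_def zero_outside_def active_pairs_def by auto
  next
    fix g assume g: "g \<in> box J \<sigma>"
    have g_bounds: "0 \<le> g j \<and> g j \<le> \<sigma> j" if "j \<in> pair_index k" for j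
      using g pair_sum_nonneg[OF that] unfolding box_def active_pairs_def
      by (cases "j \<in> J") (auto simp: active_pairs_def)
    define u where "u l = (if l \<in> pair_index k then g l
        else if k \<le> l \<and> l - k \<in> pair_index k then \<sigma> (l - k) - g (l - k)
        else if l = 4*k then s else if l = 4*k+1 then c - s else 0)" for l
    have "\<forall>j\<ge>4*k+2. u j = 0" "u (4*k) = s" "u (4*k+1) = c - s"
      using k_pos unfolding u_def pair_index_def by auto
    moreover have "u j = g j" "u (j+k) = \<sigma> j - g j" if "j \<in> pair_index k" for j
      using that pair_index_D[OF that] unfolding u_def by auto
    ultimately have "u \<in> C" unfolding mem_C_iff using g_bounds by auto
    moreover have "zero_outside J u = g"
      using g unfolding zero_outside_def u_def box_def active_pairs_def by auto
    ultimately show "g \<in> zero_outside J ` C" by blast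
  qed
qed

lemma C_diff_eq_pair_move:
  assumes u: "u \<in> C" and v: "v \<in> C" and j: "j \<in> pair_index k"
    and diff: "\<And>p. p \<in> pair_index k \<Longrightarrow> u p - v p = (if p = j then 1 else 0)"
  shows "(\<lambda>l. u l - v l) = pair_move k j"
proof
  fix l
  have "l \<in> pair_index k \<or> (l \<notin> pair_index k \<and> l < 4*k) \<or> 4*k \<le> l" by auto
  then consider "l \<in> pair_index k" | "l \<notin> pair_index k" "l < 4*k" | "4*k \<le> l" by blast
  then show "u l - v l = pair_move k j l"
  proof cases
    case 1
    then show ?thesis using diff[of l] pair_index_D[OF j] unfolding pair_move_def by auto
  next
    case 2
    then obtain p where p: "p \<in> pair_index k" "l = p + k" using pair_partner_index by metis
    then show ?thesis
      using diff[OF p(1)] C_partner[OF u p(1)] C_partner[OF v p(1)] 2(1) j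
      unfolding pair_move_def by auto
  next
    case 3
    then show ?thesis
      using C_tail_eq[OF u v] pair_index_D[OF j] unfolding pair_move_def by auto
  qed
qed

lemma C_diff_eq_pair_move_iff:
  assumes u: "u \<in> C" and v: "v \<in> C"
  shows "j \<in> pair_index k \<and> (\<lambda>l. u l - v l) = pair_move k j
     \<longleftrightarrow> zero_outside J v = (zero_outside J u)(j := zero_outside J u j - 1)"
    (is "?move \<longleftrightarrow> ?step")
proof
  assume ?move
  then have j: "j \<in> pair_index k" and d: "u l - v l = pair_move k j l" for l
    by (auto dest: fun_cong[where x = l])
  have "u j - v j = 1" using d[of j] by (simp add: pair_move_def)
  moreover have "0 \<le> v j" "u j \<le> \<sigma> j" using u v j unfolding mem_C_iff by force+
  ultimately have "j \<in> J" using j unfolding active_pairs_def by auto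
  show ?step
  proof
    fix l
    show "zero_outside J v l = ((zero_outside J u)(j := zero_outside J u j - 1)) l"
      using d[of l] \<open>j \<in> J\<close> pair_index_D[OF j]
      unfolding zero_outside_def pair_move_def active_pairs_def by (auto split: if_splits)
  qed
next
  assume step: ?step
  then have diff: "zero_outside J u l - zero_outside J v l = (if l = j then 1 else 0)" for l
    by simp
  have "j \<in> J"
  proof (rule ccontr)
    assume "j \<notin> J"
    then show False using diff[of j] unfolding zero_outside_def by simp
  qed
  then have j: "j \<in> pair_index k" unfolding active_pairs_def by simp
  then show ?move
    using C_diff_eq_pair_move[OF u v j] diff zero_outside_C[OF u] zero_outside_C[OF v] by metis
qed

lemma diff_in_graver_C:
  assumes x: "x \<in> C" and y: "y \<in> C" and G: "(\<lambda>l. x l - y l) \<in> graver (Amat k) (2*k+1) (4*k+2)"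
  shows "\<exists>j\<in>pair_index k. (\<lambda>l. x l - y l) = pair_move k j \<or> (\<lambda>l. y l - x l) = pair_move k j"
proof -
  have "x (4*k) - y (4*k) = 0" "x (4*k+1) - y (4*k+1) = 0" using C_tail_eq[OF x y] by auto
  then obtain j where j: "j \<in> pair_index k"
    and "(\<lambda>l. x l - y l) = pair_move k j \<or> (\<lambda>l. x l - y l) = (\<lambda>l. - pair_move k j l)"
    using graver_Amat_zero_tail[OF G] by auto
  then have "(\<lambda>l. x l - y l) = pair_move k j \<or> (\<lambda>l. y l - x l) = pair_move k j"
  proof (elim disjE)
    assume neg: "(\<lambda>l. x l - y l) = (\<lambda>l. - pair_move k j l)"
    have "y l - x l = pair_move k j l" for l using fun_cong[OF neg, of l] by simp
    then show ?thesis by blast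
  qed blast
  then show ?thesis using j by blast
qed

lemma fadj_C_iff:
  assumes u: "u \<in> C" and v: "v \<in> C"
  shows "fadj (graver (Amat k) (2*k+1) (4*k+2)) u v \<longleftrightarrow>
     (\<exists>j\<in>pair_index k. (\<lambda>l. u l - v l) = pair_move k j \<or> (\<lambda>l. v l - u l) = pair_move k j)"
proof
  assume "fadj (graver (Amat k) (2*k+1) (4*k+2)) u v"
  then show "\<exists>j\<in>pair_index k. (\<lambda>l. u l - v l) = pair_move k j \<or> (\<lambda>l. v l - u l) = pair_move k j"
    unfolding fadj_def using diff_in_graver_C[OF u v] diff_in_graver_C[OF v u] by blast
next
  assume "\<exists>j\<in>pair_index k. (\<lambda>l. u l - v l) = pair_move k j \<or> (\<lambda>l. v l - u l) = pair_move k j"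
  then obtain j where j: "j \<in> pair_index k"
    and d: "(\<lambda>l. u l - v l) = pair_move k j \<or> (\<lambda>l. v l - u l) = pair_move k j" by blast
  have "u j - v j = 1 \<or> v j - u j = 1"
    using d by (metis (mono_tags, lifting) pair_move_def)
  then have "u \<noteq> v" by auto
  then show "fadj (graver (Amat k) (2*k+1) (4*k+2)) u v"
    unfolding fadj_def using d pair_move_in_graver[OF j] by metis
qed

lemma graph_iso_C_box:
  "graph_iso (zero_outside J) C (fadj (graver (Amat k) (2*k+1) (4*k+2))) (box J \<sigma>) unit_step"
  unfolding graph_iso_def
proof (intro conjI ballI bij_zero_outside)
  fix u v assume u: "u \<in> C" and v: "v \<in> C"
  have up: "g = f(j := f j + 1) \<longleftrightarrow> f = g(j := g j - 1)" for f g :: "nat \<Rightarrow> int" and j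
    by (auto simp: fun_eq_iff)
  show "unit_step (zero_outside J u) (zero_outside J v)
      \<longleftrightarrow> fadj (graver (Amat k) (2*k+1) (4*k+2)) u v"
    unfolding unit_step_def fadj_C_iff[OF u v] up
      C_diff_eq_pair_move_iff[OF u v, symmetric] C_diff_eq_pair_move_iff[OF v u, symmetric]
    by blast
qed

end

theorem lemma6:
  fixes k :: nat and w1 w2 :: "nat \<Rightarrow> int" and c s :: int
  assumes "k \<ge> 1"
    and "fiber (Amat k) (2*k+1) (4*k+2) (bvec k w1 w2 c) \<noteq> {}"
    and "lb k w1 \<le> s" and "s \<le> ub k w2 c"
  shows "min_degree (Cs k w1 w2 c s) (fadj (graver (Amat k) (2*k+1) (4*k+2)))
           = card {i. i < k \<and> w1 i + s \<noteq> 0} + card {i. i < k \<and> w2 i + (c - s) \<noteq> 0}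
       \<and> vertex_connectivity (Cs k w1 w2 c s) (fadj (graver (Amat k) (2*k+1) (4*k+2)))
           = card {i. i < k \<and> w1 i + s \<noteq> 0} + card {i. i < k \<and> w2 i + (c - s) \<noteq> 0}"
proof -
  note iso = graph_iso_C_box[OF assms(1,3,4)]
  have J: "finite (active_pairs k w1 w2 c s)" "\<forall>j\<in>active_pairs k w1 w2 c s. 1 \<le> pair_sum k w1 w2 c s j"
    using finite_active_pairs[OF assms(1,3,4)] active_pairs_pos[OF assms(1,3,4)] by auto
  show ?thesis
    using min_degree_graph_iso[OF iso] vertex_connectivity_graph_iso[OF iso]
      box_min_degree[OF J] box_vertex_connectivity[OF J] card_active_pairs by simp
qed

end
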